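(* Suppose the loss has the form $\ell(z,\theta)=q(\theta)\cdot\phi(z)$ for functions $q:\Theta\to\mathbb{R}^k$ and $\phi:\mathcal{Z}\to\mathbb{R}^k$. Suppose further that there exist constants $n_0$ and $\phi_0\in\mathbb{R}^k$ such that, for any training set $Z=\{z_1,\dots,z_n\}$ with $Z\sim\mathcal{D}^n$ and $\mathcal{D}\sim\mathcal{D}_1$, \[ \mathbb{E}_{\mathcal{D}\sim\mathcal{D}_1}\big[\mathbb{E}_{z\sim\mathcal{D}}[\phi(z)]\,\big|\,Z\big]=\frac{\phi_0+\sum_{i=1}^n\phi(z_i)}{n+n_0}. \] Then $R^*(\theta)=\frac1n q(\theta)\cdot\phi_0$ is a perfect, Bayes-optimal regularizer.
   Context: The data distribution $\mathcal{D}$ over examples $z\in\mathcal{Z}$ is itself drawn from a prior $\mathcal{D}_1$ over distributions. The training loss is $\hat L(\theta)=\frac1n\sum_{i=1}^n\ell(z_i,\theta)$, and $L(\theta,\mathcal{D})=\mathbb{E}_{z\sim\mathcal{D}}[\ell(z,\theta)]$. The conditional expected test loss is $\bar L(\theta,Z)=\mathbb{E}_{\mathcal{D}\sim\mathcal{D}_1}[L(\theta,\mathcal{D})\mid Z]$. A regularizer $R^*$ is Bayes-optimal if $\arg\min_{\theta\in\Theta}\{\hat L(\theta)+R^*(\theta)\}=\arg\min_{\theta\in\Theta}\{\bar L(\theta,Z)\}$. It is perfect if, in addition, $\hat L(\theta)+R^*(\theta)=h(\bar L(\theta,Z))$ for all $\theta\in\Theta$, for some monotone function $h$. *)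

theory Defs
  imports "HOL-Probability.Probability"
begin

definition train_loss :: "('z \<Rightarrow> 'p \<Rightarrow> real) \<Rightarrow> 'z list \<Rightarrow> 'p \<Rightarrow> real" where
  "train_loss l Z \<theta> = (\<Sum>z\<leftarrow>Z. l z \<theta>) / real (length Z)"

definition test_loss :: "('z \<Rightarrow> 'p \<Rightarrow> real) \<Rightarrow> ('d \<Rightarrow> 'z measure) \<Rightarrow> 'p \<Rightarrow> 'd \<Rightarrow> real" where
  "test_loss l Dist \<theta> d = (\<integral>z. l z \<theta> \<partial>Dist d)"

text \<open>Conditional expected test loss bar L(theta, Z) = E_{D ~ D_1}[L(theta,D) | Z],
  i.e. the expectation of L(theta, D) under the posterior Post Z of D given Z.\<close>
definition cond_test_loss ::
  "('z \<Rightarrow> 'p \<Rightarrow> real) \<Rightarrow> ('d \<Rightarrow> 'z measure) \<Rightarrow> ('z list \<Rightarrow> 'd measure) \<Rightarrow> 'p \<Rightarrow> 'z list \<Rightarrow> real" where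
  "cond_test_loss l Dist Post \<theta> Z = (\<integral>d. test_loss l Dist \<theta> d \<partial>Post Z)"

definition argmin_on :: "'p set \<Rightarrow> ('p \<Rightarrow> real) \<Rightarrow> 'p set" where
  "argmin_on \<Theta> f = {\<theta> \<in> \<Theta>. \<forall>\<theta>'\<in>\<Theta>. f \<theta> \<le> f \<theta>'}"

definition bayes_optimal ::
  "('z \<Rightarrow> 'p \<Rightarrow> real) \<Rightarrow> ('d \<Rightarrow> 'z measure) \<Rightarrow> ('z list \<Rightarrow> 'd measure) \<Rightarrow> 'p set \<Rightarrow> 'z list
   \<Rightarrow> ('p \<Rightarrow> real) \<Rightarrow> bool" where
  "bayes_optimal l Dist Post \<Theta> Z R \<longleftrightarrow>
     argmin_on \<Theta> (\<lambda>\<theta>. train_loss l Z \<theta> + R \<theta>) = argmin_on \<Theta> (\<lambda>\<theta>. cond_test_loss l Dist Post \<theta> Z)"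

definition perfect_reg ::
  "('z \<Rightarrow> 'p \<Rightarrow> real) \<Rightarrow> ('d \<Rightarrow> 'z measure) \<Rightarrow> ('z list \<Rightarrow> 'd measure) \<Rightarrow> 'p set \<Rightarrow> 'z list
   \<Rightarrow> ('p \<Rightarrow> real) \<Rightarrow> bool" where
  "perfect_reg l Dist Post \<Theta> Z R \<longleftrightarrow>
     bayes_optimal l Dist Post \<Theta> Z R \<and>
     (\<exists>h :: real \<Rightarrow> real. mono h \<and>
        (\<forall>\<theta>\<in>\<Theta>. train_loss l Z \<theta> + R \<theta> = h (cond_test_loss l Dist Post \<theta> Z)))"

end

theory Submission
  imports Defs
begin

text \<open>For a loss that is linear in the sufficient statistic \<phi>, both the training loss and the
  conditional test loss are the inner product of q \<theta> with a vector: the empirical mean of \<phi>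
  and the posterior mean of E[\<phi>], respectively. The conjugacy assumption makes the latter equal
  to (\<phi>0 + \<Sum>\<phi>(z_i)) / (n + n0), so adding q \<theta> \<bullet> \<phi>0 / n to the training loss yields exactly
  (n + n0) / n times the conditional test loss. A positive rescaling is strictly monotone and
  hence preserves minimisers.\<close>

lemma inner_sum_list_right:
  fixes c :: "'a::real_inner"
  shows "c \<bullet> (\<Sum>x\<leftarrow>xs. f x) = (\<Sum>x\<leftarrow>xs. c \<bullet> f x)"
  by (induction xs) (simp_all add: inner_add_right)

lemma argmin_on_strict_mono_comp:
  fixes h :: "real \<Rightarrow> real"
  assumes "strict_mono h" and "\<And>\<theta>. \<theta> \<in> \<Theta> \<Longrightarrow> f \<theta> = h (g \<theta>)"
  shows "argmin_on \<Theta> f = argmin_on \<Theta> g"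
  using assms unfolding argmin_on_def by (auto simp: strict_mono_less_eq)

lemma perfect_reg_if_strict_mono:
  fixes h :: "real \<Rightarrow> real"
  assumes h: "strict_mono h"
    and eq: "\<And>\<theta>. \<theta> \<in> \<Theta> \<Longrightarrow> train_loss l Z \<theta> + R \<theta> = h (cond_test_loss l Dist Post \<theta> Z)"
  shows "perfect_reg l Dist Post \<Theta> Z R"
proof -
  have "bayes_optimal l Dist Post \<Theta> Z R"
    unfolding bayes_optimal_def by (rule argmin_on_strict_mono_comp[OF h eq])
  moreover have "mono h"
    using h by (simp add: strict_mono_mono)
  ultimately show ?thesis
    unfolding perfect_reg_def using eq by blast
qed

lemma train_loss_inner:
  fixes q :: "'p \<Rightarrow> 'a::real_inner"
  shows "train_loss (\<lambda>z \<theta>. q \<theta> \<bullet> \<phi> z) Z \<theta> = q \<theta> \<bullet> (\<Sum>z\<leftarrow>Z. \<phi> z) / real (length Z)"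
  unfolding train_loss_def by (simp add: inner_sum_list_right)

lemma cond_test_loss_inner:
  fixes q :: "'p \<Rightarrow> 'a::euclidean_space"
  assumes "\<And>d. integrable (Dist d) \<phi>"
    and "integrable (Post Z) (\<lambda>d. \<integral>z. \<phi> z \<partial>Dist d)"
  shows "cond_test_loss (\<lambda>z \<theta>. q \<theta> \<bullet> \<phi> z) Dist Post \<theta> Z
    = q \<theta> \<bullet> (\<integral>d. (\<integral>z. \<phi> z \<partial>Dist d) \<partial>Post Z)"
  unfolding cond_test_loss_def test_loss_def using assms by simp

theorem lemma1:
  fixes q :: "'p \<Rightarrow> real ^ 'k" and \<phi> :: "'z \<Rightarrow> real ^ 'k"
    and l :: "'z \<Rightarrow> 'p \<Rightarrow> real" and \<Theta> :: "'p set"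
    and Dist :: "'d \<Rightarrow> 'z measure" and Post :: "'z list \<Rightarrow> 'd measure"
    and n0 :: real and \<phi>0 :: "real ^ 'k" and Z :: "'z list"
  assumes loss: "\<And>z \<theta>. l z \<theta> = q \<theta> \<bullet> \<phi> z"
    and dist_prob: "\<And>d. prob_space (Dist d)"
    and post_prob: "\<And>Z. prob_space (Post Z)"
    and phi_int: "\<And>d. integrable (Dist d) \<phi>"
    and mean_int: "\<And>Z. integrable (Post Z) (\<lambda>d. \<integral>z. \<phi> z \<partial>Dist d)"
    and n0_nonneg: "0 \<le> n0"
    and post_mean: "\<And>Z. Z \<noteq> [] \<Longrightarrow>
        (\<integral>d. (\<integral>z. \<phi> z \<partial>Dist d) \<partial>Post Z)
          = (1 / (real (length Z) + n0)) *\<^sub>R (\<phi>0 + (\<Sum>z\<leftarrow>Z. \<phi> z))"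
    and Z_ne: "Z \<noteq> []"
  shows "perfect_reg l Dist Post \<Theta> Z (\<lambda>\<theta>. (1 / real (length Z)) * (q \<theta> \<bullet> \<phi>0))"
proof (rule perfect_reg_if_strict_mono)
  define n where "n = real (length Z)"
  have n_pos: "0 < n" and n_n0_pos: "0 < n + n0"
    using Z_ne n0_nonneg by (simp_all add: n_def add_pos_nonneg)
  have l_eq: "l = (\<lambda>z \<theta>. q \<theta> \<bullet> \<phi> z)"
    using loss by blast
  show "strict_mono (\<lambda>x. (n + n0) / n * x)"
    using n_pos n_n0_pos by (intro strict_monoI mult_strict_left_mono) simp_all
  fix \<theta>
  have "cond_test_loss l Dist Post \<theta> Z = (q \<theta> \<bullet> \<phi>0 + q \<theta> \<bullet> (\<Sum>z\<leftarrow>Z. \<phi> z)) / (n + n0)"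
    unfolding l_eq cond_test_loss_inner[OF phi_int mean_int] post_mean[OF Z_ne]
    by (simp add: n_def inner_add_right)
  moreover have "train_loss l Z \<theta> = q \<theta> \<bullet> (\<Sum>z\<leftarrow>Z. \<phi> z) / n"
    unfolding l_eq train_loss_inner n_def ..
  ultimately show "train_loss l Z \<theta> + 1 / real (length Z) * (q \<theta> \<bullet> \<phi>0)
      = (n + n0) / n * cond_test_loss l Dist Post \<theta> Z"
    using n_pos n_n0_pos by (simp add: n_def field_simps)
qed

end
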